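(* The simplicial generators $\{h_S:\emptyset\subsetneq S\subseteq E\}$ form a basis of $A^1(X_{\mathbf a})$. In particular, monomials in them span $A^\bullet(X_{\mathbf a})$ as an abelian group.
   Context: $E=\{1,\dots,m\}$, $\mathbf a\in\mathbb Z^m_{\ge0}$, $n=\sum a_i$, $\widetilde E$ an $n$-element set, $\pi:\widetilde E\to E$ with $|\pi^{-1}(i)|=a_i$, $\mathbf e_U=\sum_{j\in U}\mathbf e_j$. The polystellahedral fan $\Sigma_{\mathbf a}\subset\mathbb R^{\widetilde E}$ has cones $\operatorname{cone}(-\mathbf e_{\widetilde E\setminus\pi^{-1}(F_1)},\dots,-\mathbf e_{\widetilde E\setminus\pi^{-1}(F_k)},\mathbf e_j:j\in I)$ for $I\subseteq\widetilde E$ and chains $F_1\subsetneq\dots\subsetneq F_k\subsetneq F_{k+1}=E$ ($k\ge0$) with $\pi^{-1}(A)\subseteq I\Rightarrow A\subseteq F_1$; $X_{\mathbf a}$ is its smooth projective toric variety and $A^\bullet(X_{\mathbf a})$ its Chow ring. For $\emptyset\subseteq T\subsetneq E$, $x_T$ is the divisor class of the ray $\mathbb R_{\ge0}(-\mathbf e_{\widetilde E\setminus\pi^{-1}(T)})$. For nonempty $S\subseteq E$, $h_S=\sum_{\emptyset\subseteq T\subsetneq E,\ T\not\supseteq S}x_T$. *)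

theory Defs
  imports "HOL-Library.Poly_Mapping"
begin

text \<open>Ray labels of the polystellahedral fan: Inl T stands for the ray of
  -e_(Et - pi^-1(T)) (T a proper subset of E), Inr j for the ray of e_j (j in Et).\<close>
type_synonym 'b ray = "nat set + 'b"

type_synonym 'b rpoly = "('b ray \<Rightarrow>\<^sub>0 nat) \<Rightarrow>\<^sub>0 int"

definition groundE :: "nat \<Rightarrow> nat set" where
  "groundE m = {1..m}"

definition preim :: "'b set \<Rightarrow> ('b \<Rightarrow> nat) \<Rightarrow> nat set \<Rightarrow> 'b set" where
  "preim Et \<pi> A = {j \<in> Et. \<pi> j \<in> A}"

definition rays :: "nat \<Rightarrow> 'b set \<Rightarrow> 'b ray set" where
  "rays m Et = Inl ` {T. T \<subset> groundE m} \<union> Inr ` Et"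

definition ray_vec :: "nat \<Rightarrow> 'b set \<Rightarrow> ('b \<Rightarrow> nat) \<Rightarrow> 'b ray \<Rightarrow> 'b \<Rightarrow> int" where
  "ray_vec m Et \<pi> r = (case r of
      Inl T \<Rightarrow> (\<lambda>j. if j \<in> Et - preim Et \<pi> T then -1 else 0)
    | Inr i \<Rightarrow> (\<lambda>j. if j = i then 1 else 0))"

text \<open>Ray sets of the cones of the polystellahedral fan:
  cone(-e_(Et - pi^-1 F_1), ..., -e_(Et - pi^-1 F_k), e_j : j in I) for a chain
  F_1 < ... < F_k < F_(k+1) = E and I subset Et with pi^-1(A) subset I ==> A subset F_1.\<close>
definition is_face :: "nat \<Rightarrow> 'b set \<Rightarrow> ('b \<Rightarrow> nat) \<Rightarrow> 'b ray set \<Rightarrow> bool" where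
  "is_face m Et \<pi> R \<longleftrightarrow>
     (\<exists>C I. C \<subseteq> {T. T \<subset> groundE m} \<and>
            (\<forall>F\<in>C. \<forall>G\<in>C. F \<subseteq> G \<or> G \<subseteq> F) \<and>
            I \<subseteq> Et \<and>
            (\<forall>A \<subseteq> groundE m. preim Et \<pi> A \<subseteq> I \<longrightarrow>
                 A \<subseteq> (if C = {} then groundE m else \<Inter>C)) \<and>
            R = Inl ` C \<union> Inr ` I)"

definition var :: "'b ray \<Rightarrow> 'b rpoly" where
  "var r = Poly_Mapping.single (Poly_Mapping.single r 1) 1"

definition uses_vars :: "'b ray set \<Rightarrow> 'b rpoly \<Rightarrow> bool" where
  "uses_vars R p \<longleftrightarrow> (\<forall>mon \<in> Poly_Mapping.keys p. Poly_Mapping.keys mon \<subseteq> R)"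

definition SR_gens :: "nat \<Rightarrow> 'b set \<Rightarrow> ('b \<Rightarrow> nat) \<Rightarrow> 'b rpoly set" where
  "SR_gens m Et \<pi> = {(\<Prod>r\<in>R. var r) | R. R \<subseteq> rays m Et \<and> \<not> is_face m Et \<pi> R}"

definition lin_gens :: "nat \<Rightarrow> 'b set \<Rightarrow> ('b \<Rightarrow> nat) \<Rightarrow> 'b rpoly set" where
  "lin_gens m Et \<pi> = (\<lambda>u :: 'b \<Rightarrow> int.
      (\<Sum>r\<in>rays m Et. of_int (\<Sum>j\<in>Et. u j * ray_vec m Et \<pi> r j) * var r)) ` UNIV"

definition ideal_gen :: "'c::comm_ring_1 set \<Rightarrow> 'c set" where
  "ideal_gen G = {p. \<exists>F c. finite F \<and> F \<subseteq> G \<and> p = (\<Sum>g\<in>F. c g * g)}"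

text \<open>The Chow ring A(X_a) = Z[x_rho : rho ray] / (I_SR + J): two polynomials in the
  ray variables represent the same Chow class iff their difference lies in this ideal.\<close>
definition chow_ideal :: "nat \<Rightarrow> 'b set \<Rightarrow> ('b \<Rightarrow> nat) \<Rightarrow> 'b rpoly set" where
  "chow_ideal m Et \<pi> = ideal_gen (SR_gens m Et \<pi> \<union> lin_gens m Et \<pi>)"

definition xT :: "nat set \<Rightarrow> 'b rpoly" where
  "xT T = var (Inl T)"

definition hS :: "nat \<Rightarrow> nat set \<Rightarrow> 'b rpoly" where
  "hS m S = (\<Sum>T\<in>{T. T \<subset> groundE m \<and> \<not> S \<subseteq> T}. xT T)"

definition linear_form :: "'b ray set \<Rightarrow> 'b rpoly \<Rightarrow> bool" where
  "linear_form R p \<longleftrightarrow> (\<exists>c. p = (\<Sum>r\<in>R. of_int (c r) * var r))"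

end

theory Submission
  imports Defs HOL.Modules
begin

(* Every ray variable is congruent modulo the Chow ideal to an integer combination of the h_S.
   For a coordinate ray e_j, the linear relation given by the dual vector e_j reads
   x_(e_j) = h_({pi j}); the x_T are recovered from the h_S by Moebius inversion on the
   Boolean lattice of subsets of E. Hence the h_S span A^1, and since every polynomial is
   built from the variables, monomials in the h_S span A.
   For independence: every single ray spans a cone (this is where a_i >= 1 is used), so
   Stanley-Reisner monomials have degree at least two and the linear part of any element of
   the ideal is a linear relation. A combination of the h_S has no x_(e_j) terms, which forces
   that relation to vanish; its x_T coefficient then says that the d_S with S not contained in T
   sum to zero, for every proper T, and Moebius inversion again gives d = 0. *)

section \<open>Ideals and integer spans in a commutative ring\<close>

global_interpretation ring_ideal: module "(*) :: 'a::comm_ring_1 \<Rightarrow> 'a \<Rightarrow> 'a"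
  by unfold_locales (simp_all add: algebra_simps)

(* The scale_scale rules of both interpretations are associativity laws oriented against
   mult.assoc; as simp rules they make algebra_simps loop. *)
declare ring_ideal.scale_scale [simp del]

global_interpretation int_module: module "\<lambda>k::int. \<lambda>x::'a::comm_ring_1. of_int k * x"
  by unfold_locales (simp_all add: algebra_simps)

declare int_module.scale_scale [simp del]

lemma ideal_gen_eq_span: "ideal_gen G = ring_ideal.span G"
  by (auto simp: ideal_gen_def ring_ideal.span_explicit)

lemma int_span_imageE:
  assumes "x \<in> int_module.span (f ` A)"
  obtains M c where "finite M" "M \<subseteq> A" "x = (\<Sum>a\<in>M. of_int (c a) * f a)"
proof -
  obtain t r where t: "finite t" "t \<subseteq> f ` A" "x = (\<Sum>v\<in>t. of_int (r v) * v)"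
    using assms unfolding int_module.span_explicit by blast
  let ?g = "inv_into A f"
  have inj: "inj_on ?g t"
    using t(2) by (rule inj_on_inv_into)
  have "x = (\<Sum>v\<in>t. of_int (r (f (?g v))) * f (?g v))"
    unfolding t(3) using t(2) by (intro sum.cong refl) (simp add: f_inv_into_f subset_eq)
  also have "\<dots> = (\<Sum>a\<in>?g ` t. of_int (r (f a)) * f a)"
    by (simp only: sum.reindex[OF inj] comp_def)
  finally have "x = (\<Sum>a\<in>?g ` t. of_int (r (f a)) * f a)" .
  moreover have "?g ` t \<subseteq> A"
    using t(2) by (auto intro: inv_into_into)
  ultimately show ?thesis
    using t(1) by (intro that[of "?g ` t" "\<lambda>a. r (f a)"]) auto
qed

lemma int_span_image_finite_iff:
  assumes "finite A"
  shows "x \<in> int_module.span (f ` A) \<longleftrightarrow> (\<exists>d. x = (\<Sum>a\<in>A. of_int (d a) * f a))"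
proof
  assume "x \<in> int_module.span (f ` A)"
  then obtain M c where M: "finite M" "M \<subseteq> A" "x = (\<Sum>a\<in>M. of_int (c a) * f a)"
    by (rule int_span_imageE)
  have "x = (\<Sum>a\<in>A. of_int (if a \<in> M then c a else 0) * f a)"
    unfolding M(3) by (rule sum.mono_neutral_cong_right[symmetric]) (use M assms in auto)
  then show "\<exists>d. x = (\<Sum>a\<in>A. of_int (d a) * f a)"
    by (rule exI[of _ "\<lambda>a. if a \<in> M then c a else 0"])
next
  assume "\<exists>d. x = (\<Sum>a\<in>A. of_int (d a) * f a)"
  then obtain d where "x = (\<Sum>a\<in>A. of_int (d a) * f a)" ..
  then show "x \<in> int_module.span (f ` A)"
    by (simp only:) (intro int_module.span_sum int_module.span_scale int_module.span_base imageI)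
qed

lemma int_span_mult_closed:
  assumes B: "\<And>x y. x \<in> B \<Longrightarrow> y \<in> B \<Longrightarrow> x * y \<in> B"
    and x: "x \<in> int_module.span B" and y: "y \<in> int_module.span B"
  shows "x * y \<in> int_module.span B"
proof -
  have left: "int_module.subspace {x. x * y' \<in> int_module.span B}" for y'
    by (auto simp: int_module.subspace_def distrib_right mult.assoc
        intro: int_module.span_add int_module.span_scale int_module.span_zero)
  have right: "int_module.subspace {y. x * y \<in> int_module.span B}"
    by (auto simp: int_module.subspace_def distrib_left mult.left_commute[of x]
        intro: int_module.span_add int_module.span_scale int_module.span_zero)
  have "x * y' \<in> int_module.span B" if "y' \<in> B" for y'
    using int_module.span_subspace_induct[OF x left] B that int_module.span_base by blast
  then show ?thesis
    using int_module.span_subspace_induct[OF y right] by blast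
qed

lemma int_subspace_plus_ideal:
  assumes "int_module.subspace W"
  shows "int_module.subspace {p. \<exists>w\<in>W. p - w \<in> ring_ideal.span G}"
  unfolding int_module.subspace_def
proof (intro conjI ballI allI)
  show "0 \<in> {p. \<exists>w\<in>W. p - w \<in> ring_ideal.span G}"
    using int_module.subspace_0[OF assms] ring_ideal.span_zero by force
next
  fix p q assume "p \<in> {p. \<exists>w\<in>W. p - w \<in> ring_ideal.span G}" "q \<in> {p. \<exists>w\<in>W. p - w \<in> ring_ideal.span G}"
  then obtain v w where "v \<in> W" "p - v \<in> ring_ideal.span G" "w \<in> W" "q - w \<in> ring_ideal.span G"
    by blast
  moreover have "p + q - (v + w) = (p - v) + (q - w)"
    by simp
  ultimately show "p + q \<in> {p. \<exists>w\<in>W. p - w \<in> ring_ideal.span G}"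
    using assms by (metis (mono_tags) mem_Collect_eq int_module.subspace_add ring_ideal.span_add)
next
  fix c :: int and p assume "p \<in> {p. \<exists>w\<in>W. p - w \<in> ring_ideal.span G}"
  then obtain w where "w \<in> W" "p - w \<in> ring_ideal.span G"
    by blast
  moreover have "of_int c * p - of_int c * w = of_int c * (p - w)"
    by (simp add: right_diff_distrib)
  ultimately show "of_int c * p \<in> {p. \<exists>w\<in>W. p - w \<in> ring_ideal.span G}"
    using assms by (metis (mono_tags) mem_Collect_eq int_module.subspace_scale ring_ideal.span_scale)
qed

lemma mult_mem_plus_ideal:
  assumes "v \<in> W" "p - v \<in> ring_ideal.span G" "w \<in> W" "q - w \<in> ring_ideal.span G"
    and "v * w \<in> W"
  shows "\<exists>u\<in>W. p * q - u \<in> ring_ideal.span G"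
proof
  have "p * q - v * w = p * (q - w) + w * (p - v)"
    by (simp add: algebra_simps)
  then show "p * q - v * w \<in> ring_ideal.span G"
    using assms by (simp add: ring_ideal.span_add ring_ideal.span_scale)
qed (fact assms)


section \<open>Moebius inversion on subsets\<close>

lemma sum_split_by_pred:
  assumes "finite A"
  shows "sum f A = sum f {x\<in>A. P x} + sum f {x\<in>A. \<not> P x}"
proof -
  have "A = {x\<in>A. P x} \<union> {x\<in>A. \<not> P x}"
    by auto
  then show ?thesis
    using assms by (subst (1) \<open>A = _\<close>, intro sum.union_disjoint) auto
qed

lemma finite_psubsets: "finite E \<Longrightarrow> finite {U. U \<subset> E}"
  by (auto intro: rev_finite_subset[of "Pow E"])

lemma mem_int_span_nonsuperset_sums:
  fixes x :: "'x set \<Rightarrow> 'a::comm_ring_1"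
  assumes "finite E"
    and h: "\<And>S. h S = (\<Sum>U | U \<subset> E \<and> \<not> S \<subseteq> U. x U)"
    and "T \<subset> E"
  shows "x T \<in> int_module.span (h ` {S. S \<noteq> {} \<and> S \<subseteq> E})"
proof -
  let ?V = "int_module.span (h ` {S. S \<noteq> {} \<and> S \<subseteq> E})"
  define up where "up S = (\<Sum>U | U \<subset> E \<and> S \<subseteq> U. x U)" for S
  have h_mem: "h S \<in> ?V" if "S \<subseteq> E" for S
  proof (cases "S = {}")
    case True
    then show ?thesis by (simp add: h int_module.span_zero)
  qed (use that in \<open>auto intro: int_module.span_base\<close>)
  have "h E = (\<Sum>U | U \<subset> E. x U)"
    unfolding h by (intro sum.cong) auto
  also have "\<dots> = h S + up S" for S
    using sum_split_by_pred[OF finite_psubsets[OF assms(1)], of x "\<lambda>U. \<not> S \<subseteq> U"]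
    by (simp add: h up_def)
  finally have "up S = h E - h S" for S
    by (metis add_diff_cancel_left')
  then have up_mem: "up S \<in> ?V" if "S \<subseteq> E" for S
    using h_mem[OF that] h_mem[of E] by (simp add: int_module.span_diff)
  show ?thesis
    using \<open>T \<subset> E\<close>
  proof (induction "card (E - T)" arbitrary: T rule: less_induct)
    case less
    have fin: "finite {U. T \<subset> U \<and> U \<subset> E}"
      using finite_psubsets[OF assms(1)] by (rule rev_finite_subset) auto
    have "{U. U \<subset> E \<and> T \<subseteq> U} = insert T {U. T \<subset> U \<and> U \<subset> E}"
      using less.prems by auto
    then have "x T = up T - (\<Sum>U | T \<subset> U \<and> U \<subset> E. x U)"
      using fin by (simp add: up_def)
    moreover have "x U \<in> ?V" if "T \<subset> U" "U \<subset> E" for U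
    proof (rule less.hyps)
      show "card (E - U) < card (E - T)"
        using that assms(1) by (intro psubset_card_mono) auto
    qed (fact that(2))
    then have "(\<Sum>U | T \<subset> U \<and> U \<subset> E. x U) \<in> ?V"
      by (intro int_module.span_sum) simp
    ultimately show ?case
      using up_mem less.prems by (simp add: int_module.span_diff)
  qed
qed

lemma eq_0_if_nonsuperset_sums_eq_0:
  fixes d :: "'x set \<Rightarrow> 'a::ab_group_add"
  assumes "finite E"
    and zero: "\<And>T. T \<subset> E \<Longrightarrow> (\<Sum>S | S \<noteq> {} \<and> S \<subseteq> E \<and> \<not> S \<subseteq> T. d S) = 0"
    and "S \<noteq> {}" "S \<subseteq> E"
  shows "d S = 0"
proof -
  let ?D = "\<Sum>S | S \<noteq> {} \<and> S \<subseteq> E. d S"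
  have fin: "finite {S. S \<noteq> {} \<and> S \<subseteq> E}"
    using assms(1) by (auto intro: rev_finite_subset[of "Pow E"])
  have "{} \<subset> E"
    using assms(3,4) by auto
  moreover have "{S. S \<noteq> {} \<and> S \<subseteq> E \<and> \<not> S \<subseteq> {}} = {S. S \<noteq> {} \<and> S \<subseteq> E}"
    by auto
  ultimately have "?D = 0"
    using zero[of "{}"] by simp
  have sub: "(\<Sum>S | S \<noteq> {} \<and> S \<subseteq> T. d S) = 0" if "T \<subseteq> E" for T
  proof (cases "T = E")
    case False
    have "?D = (\<Sum>S | S \<noteq> {} \<and> S \<subseteq> E \<and> \<not> S \<subseteq> T. d S) + (\<Sum>S | S \<noteq> {} \<and> S \<subseteq> E \<and> S \<subseteq> T. d S)"
      using sum_split_by_pred[OF fin, of d "\<lambda>S. \<not> S \<subseteq> T"] by (simp add: conj_assoc)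
    moreover have "{S. S \<noteq> {} \<and> S \<subseteq> E \<and> S \<subseteq> T} = {S. S \<noteq> {} \<and> S \<subseteq> T}"
      using that by auto
    ultimately show ?thesis
      using zero[of T] that False \<open>?D = 0\<close> by simp
  qed (use \<open>?D = 0\<close> in simp)
  have "finite S"
    using assms(1,4) by (rule finite_subset[rotated])
  then show ?thesis
    using assms(3,4)
  proof (induction S rule: finite_psubset_induct)
    case (psubset S)
    have "{S'. S' \<noteq> {} \<and> S' \<subseteq> S} = insert S {S'. S' \<noteq> {} \<and> S' \<subset> S}"
      using psubset.prems by auto
    moreover have "finite {S'. S' \<noteq> {} \<and> S' \<subset> S}"
      using psubset.hyps by (auto intro: rev_finite_subset[of "Pow S"])
    ultimately have "d S = (\<Sum>S' | S' \<noteq> {} \<and> S' \<subseteq> S. d S') - (\<Sum>S' | S' \<noteq> {} \<and> S' \<subset> S. d S')"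
      by simp
    also have "(\<Sum>S' | S' \<noteq> {} \<and> S' \<subset> S. d S') = 0"
      using psubset by (intro sum.neutral) auto
    also have "(\<Sum>S' | S' \<noteq> {} \<and> S' \<subseteq> S. d S') = 0"
      using sub psubset.prems by blast
    finally show ?case
      by simp
  qed
qed


section \<open>Low-degree coefficients of integer polynomials\<close>

lemma add_eq_zero_iff_poly_mapping:
  fixes m n :: "'x \<Rightarrow>\<^sub>0 nat"
  shows "m + n = 0 \<longleftrightarrow> m = 0 \<and> n = 0"
  by (metis add_is_0 lookup_add lookup_zero poly_mapping_eqI add_0)

lemma single_one_neq_zero: "Poly_Mapping.single r (1::nat) \<noteq> 0"
  by (metis keys_single keys_zero one_neq_zero insert_not_empty)

lemma single_one_eq_iff: "Poly_Mapping.single r (1::nat) = Poly_Mapping.single s 1 \<longleftrightarrow> r = s"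
  by (metis lookup_single_eq lookup_single_not_eq one_neq_zero)

lemma add_eq_single_one_iff:
  fixes m n :: "'x \<Rightarrow>\<^sub>0 nat"
  shows "m + n = Poly_Mapping.single r 1 \<longleftrightarrow>
    m = 0 \<and> n = Poly_Mapping.single r 1 \<or> m = Poly_Mapping.single r 1 \<and> n = 0"
proof
  assume sum: "m + n = Poly_Mapping.single r 1"
  then have lookups: "Poly_Mapping.lookup m x + Poly_Mapping.lookup n x = (if x = r then 1 else 0)" for x
    by (simp add: lookup_single when_def flip: lookup_add)
  have "m = 0 \<or> n = 0"
  proof (cases "Poly_Mapping.lookup m r = 0")
    case True
    then have "Poly_Mapping.lookup m x = 0" for x
      using lookups[of x] by (cases "x = r") auto
    then show ?thesis
      by (simp add: poly_mapping_eqI)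
  next
    case False
    then have "Poly_Mapping.lookup n x = 0" for x
      using lookups[of x] by (cases "x = r") auto
    then show ?thesis
      by (simp add: poly_mapping_eqI)
  qed
  then show "m = 0 \<and> n = Poly_Mapping.single r 1 \<or> m = Poly_Mapping.single r 1 \<and> n = 0"
    using sum by auto
qed auto

lemma lookup_mult_zero:
  fixes p q :: "('x \<Rightarrow>\<^sub>0 nat) \<Rightarrow>\<^sub>0 int"
  shows "Poly_Mapping.lookup (p * q) 0 = Poly_Mapping.lookup p 0 * Poly_Mapping.lookup q 0"
proof (induction p rule: frag_induction[OF subset_UNIV])
  case (2 m)
  show ?case
  proof (induction q rule: frag_induction[OF subset_UNIV])
    case (2 n)
    then show ?case
      by (simp add: mult_single lookup_single when_def add_eq_zero_iff_poly_mapping eq_commute[of 0])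
  qed (simp_all add: lookup_minus right_diff_distrib)
qed (simp_all add: lookup_minus left_diff_distrib)

lemma lookup_mult_single_one:
  fixes p q :: "('x \<Rightarrow>\<^sub>0 nat) \<Rightarrow>\<^sub>0 int"
  shows "Poly_Mapping.lookup (p * q) (Poly_Mapping.single r 1) =
    Poly_Mapping.lookup p 0 * Poly_Mapping.lookup q (Poly_Mapping.single r 1)
    + Poly_Mapping.lookup p (Poly_Mapping.single r 1) * Poly_Mapping.lookup q 0"
proof (induction p rule: frag_induction[OF subset_UNIV])
  case (2 m)
  show ?case
  proof (induction q rule: frag_induction[OF subset_UNIV])
    case (2 n)
    have "Poly_Mapping.lookup (frag_of m * frag_of n) (Poly_Mapping.single r 1)
        = of_bool (m + n = Poly_Mapping.single r 1)"
      by (simp add: mult_single lookup_single when_def)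
    also have "\<dots> = of_bool (0 = m) * of_bool (Poly_Mapping.single r 1 = n)
        + of_bool (Poly_Mapping.single r 1 = m) * of_bool (0 = n)"
      unfolding add_eq_single_one_iff using single_one_neq_zero[of r] by auto
    finally show ?case
      by (simp add: of_bool_def)
  qed (simp_all add: lookup_minus right_diff_distrib)
qed (simp_all add: lookup_minus left_diff_distrib)

lemma lookup_of_int_mult:
  fixes p :: "('x \<Rightarrow>\<^sub>0 nat) \<Rightarrow>\<^sub>0 int"
  shows "Poly_Mapping.lookup (of_int k * p) m = k * Poly_Mapping.lookup p m"
proof -
  have "of_int k * p = Poly_Mapping.map ((*) k) p"
    by (simp add: mult_map_scale_conv_mult flip: single_of_int)
  then show ?thesis
    by (simp add: Poly_Mapping.map.rep_eq when_def)
qed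

lemma prod_single_one:
  "finite K \<Longrightarrow> (\<Prod>r\<in>K. Poly_Mapping.single (g r) (1::'c::comm_semiring_1))
    = Poly_Mapping.single (\<Sum>r\<in>K. g r) 1"
  by (induction K rule: finite_induct) (simp_all add: mult_single)

lemma sum_single_lookup: "(\<Sum>r\<in>Poly_Mapping.keys m. Poly_Mapping.single r (Poly_Mapping.lookup m r)) = m"
  by (rule poly_mapping_eqI) (simp add: lookup_sum lookup_single when_def sum.delta in_keys_iff)

lemma var_power: "var r ^ n = Poly_Mapping.single (Poly_Mapping.single r n) 1"
  by (induction n) (simp_all add: var_def mult_single flip: single_add)

lemma monomial_eq_prod_var_power:
  "Poly_Mapping.single m 1 = (\<Prod>r\<in>Poly_Mapping.keys m. var r ^ Poly_Mapping.lookup m r)"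
proof -
  have "(\<Prod>r\<in>Poly_Mapping.keys m. var r ^ Poly_Mapping.lookup m r)
      = Poly_Mapping.single (\<Sum>r\<in>Poly_Mapping.keys m. Poly_Mapping.single r (Poly_Mapping.lookup m r)) 1"
    unfolding var_power by (rule prod_single_one) simp
  then show ?thesis
    by (simp add: sum_single_lookup)
qed

lemma polynomial_mem_subring:
  assumes "uses_vars R p"
    and one: "1 \<in> A"
    and diff: "\<And>x y. x \<in> A \<Longrightarrow> y \<in> A \<Longrightarrow> x - y \<in> A"
    and mult: "\<And>x y. x \<in> A \<Longrightarrow> y \<in> A \<Longrightarrow> x * y \<in> A"
    and vars: "\<And>r. r \<in> R \<Longrightarrow> var r \<in> A"
  shows "p \<in> A"
proof -
  have power: "x ^ n \<in> A" if "x \<in> A" for x n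
    by (induction n) (simp_all add: one mult that)
  have "(\<Prod>r\<in>K. var r ^ n r) \<in> A" if "K \<subseteq> R" "finite K" for K n
    using that(2,1) by (induction K rule: finite_induct) (simp_all add: one mult power vars)
  then have monomial: "Poly_Mapping.single m 1 \<in> A" if "Poly_Mapping.keys m \<subseteq> R" for m
    unfolding monomial_eq_prod_var_power using that by simp
  have zero: "0 \<in> A"
    using diff[OF one one] by simp
  have "Poly_Mapping.keys p \<subseteq> {m. Poly_Mapping.keys m \<subseteq> R}"
    using assms(1) unfolding uses_vars_def by blast
  then show ?thesis
    by (induction p rule: frag_induction) (auto intro: zero monomial diff)
qed


section \<open>The polystellahedral Chow ring\<close>

lemma chow_ideal_eq_span: "chow_ideal m Et \<pi> = ring_ideal.span (SR_gens m Et \<pi> \<union> lin_gens m Et \<pi>)"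
  by (simp add: chow_ideal_def ideal_gen_eq_span)

lemma finite_groundE: "finite (groundE m)"
  by (simp add: groundE_def)

lemma finite_psubsets_groundE: "finite {T. T \<subset> groundE m}"
  by (simp add: finite_psubsets groundE_def)

lemma finite_nonempty_subsets_groundE: "finite {S. S \<noteq> {} \<and> S \<subseteq> groundE m}"
  by (auto simp: groundE_def intro: rev_finite_subset[of "Pow {1..m}"])

lemma rays_eq_Plus: "rays m Et = {T. T \<subset> groundE m} <+> Et"
  by (auto simp: rays_def)

lemma finite_rays: "finite Et \<Longrightarrow> finite (rays m Et)"
  by (simp add: rays_eq_Plus finite_psubsets_groundE)

lemma sum_rays:
  "finite Et \<Longrightarrow>
    (\<Sum>r\<in>rays m Et. f r) = (\<Sum>T | T \<subset> groundE m. f (Inl T)) + (\<Sum>j\<in>Et. f (Inr j))"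
  by (simp add: rays_eq_Plus sum.Plus finite_psubsets_groundE comp_def)

lemma is_face_empty: "is_face m Et \<pi> {}"
  unfolding is_face_def by (intro exI[of _ "{}"]) auto

lemma is_face_singleton:
  assumes surj: "\<forall>i\<in>groundE m. \<exists>j\<in>Et. \<pi> j = i" and "r \<in> rays m Et"
  shows "is_face m Et \<pi> {r}"
proof (cases r)
  case (Inl T)
  have "A = {}" if "A \<subseteq> groundE m" "preim Et \<pi> A \<subseteq> {}" for A
    using surj that by (fastforce simp: preim_def)
  then show ?thesis
    unfolding is_face_def using Inl assms(2)
    by (intro exI[of _ "{T}"] exI[of _ "{}"]) (auto simp: rays_def)
next
  case (Inr j)
  then show ?thesis
    unfolding is_face_def using assms(2)
    by (intro exI[of _ "{}"] exI[of _ "{j}"]) (auto simp: rays_def)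
qed

abbreviation const_coeff :: "'b rpoly \<Rightarrow> int" where
  "const_coeff p \<equiv> Poly_Mapping.lookup p 0"

abbreviation linear_coeff :: "'b ray \<Rightarrow> 'b rpoly \<Rightarrow> int" where
  "linear_coeff r p \<equiv> Poly_Mapping.lookup p (Poly_Mapping.single r 1)"

lemma const_coeff_var: "const_coeff (var r) = 0"
  using single_one_neq_zero[of r] by (simp add: var_def lookup_single when_def)

lemma linear_coeff_var: "linear_coeff s (var r) = of_bool (r = s)"
  unfolding var_def lookup_single when_def single_one_eq_iff by simp

lemma SR_gen_low_coeffs:
  assumes "finite Et" and surj: "\<forall>i\<in>groundE m. \<exists>j\<in>Et. \<pi> j = i" and "g \<in> SR_gens m Et \<pi>"
  shows "const_coeff g = 0" "linear_coeff s g = 0"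
proof -
  obtain R where R: "g = (\<Prod>r\<in>R. var r)" "R \<subseteq> rays m Et" "\<not> is_face m Et \<pi> R"
    using assms(3) unfolding SR_gens_def by blast
  have "finite R"
    using R(2) finite_rays[OF assms(1)] by (rule finite_subset)
  define M where "M = (\<Sum>r\<in>R. Poly_Mapping.single r (1::nat))"
  have g: "g = Poly_Mapping.single M 1"
    unfolding R(1) M_def var_def using \<open>finite R\<close> by (rule prod_single_one)
  have lookup_M: "Poly_Mapping.lookup M x = of_bool (x \<in> R)" for x
    using \<open>finite R\<close> by (simp add: M_def lookup_sum lookup_single when_def)
  have "R \<noteq> {}"
    using R(3) is_face_empty by blast
  then have "M \<noteq> 0"
    using lookup_M by (metis all_not_in_conv lookup_zero of_bool_eq(2) zero_neq_one)
  moreover have "M \<noteq> Poly_Mapping.single s 1"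
  proof
    assume "M = Poly_Mapping.single s 1"
    then have "x \<in> R \<longleftrightarrow> x = s" for x
      using lookup_M[of x] by (cases "x \<in> R") (auto simp: lookup_single when_def split: if_splits)
    then have "R = {s}"
      by blast
    then show False
      using R(2,3) is_face_singleton[OF surj] by auto
  qed
  ultimately show "const_coeff g = 0" "linear_coeff s g = 0"
    by (simp_all add: g lookup_single when_def)
qed

lemma lin_gen_low_coeffs:
  assumes "finite Et" "g \<in> lin_gens m Et \<pi>"
  shows "const_coeff g = 0 \<and>
    (\<exists>u. \<forall>r\<in>rays m Et. linear_coeff r g = (\<Sum>j\<in>Et. u j * ray_vec m Et \<pi> r j))"
proof -
  obtain u where g: "g = (\<Sum>r\<in>rays m Et. of_int (\<Sum>j\<in>Et. u j * ray_vec m Et \<pi> r j) * var r)"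
    using assms(2) unfolding lin_gens_def by blast
  have "const_coeff g = 0"
    unfolding g lookup_sum lookup_of_int_mult const_coeff_var by simp
  moreover have "linear_coeff r g = (\<Sum>j\<in>Et. u j * ray_vec m Et \<pi> r j)" if "r \<in> rays m Et" for r
    unfolding g lookup_sum lookup_of_int_mult linear_coeff_var
    using that finite_rays[OF assms(1)] by simp
  ultimately show ?thesis
    by blast
qed

lemma chow_ideal_linear_coeffs:
  assumes "finite Et" and surj: "\<forall>i\<in>groundE m. \<exists>j\<in>Et. \<pi> j = i" and "p \<in> chow_ideal m Et \<pi>"
  obtains u where "\<And>r. r \<in> rays m Et \<Longrightarrow> linear_coeff r p = (\<Sum>j\<in>Et. u j * ray_vec m Et \<pi> r j)"
proof -
  (* an ideal because the linear part of c * p is the constant term of c times that of p *)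
  define L where "L = {p. const_coeff p = 0 \<and>
    (\<exists>u. \<forall>r\<in>rays m Et. linear_coeff r p = (\<Sum>j\<in>Et. u j * ray_vec m Et \<pi> r j))}"
  have "ring_ideal.subspace L"
    unfolding ring_ideal.subspace_def
  proof (intro conjI ballI allI)
    show "0 \<in> L"
      unfolding L_def by (auto intro: exI[of _ "\<lambda>_. 0"])
  next
    fix p q assume "p \<in> L" "q \<in> L"
    then obtain u v where
      "const_coeff p = 0" "\<forall>r\<in>rays m Et. linear_coeff r p = (\<Sum>j\<in>Et. u j * ray_vec m Et \<pi> r j)"
      "const_coeff q = 0" "\<forall>r\<in>rays m Et. linear_coeff r q = (\<Sum>j\<in>Et. v j * ray_vec m Et \<pi> r j)"
      unfolding L_def by blast
    then show "p + q \<in> L"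
      unfolding L_def
      by (auto simp: lookup_add sum.distrib distrib_right intro!: exI[of _ "\<lambda>j. u j + v j"])
  next
    fix c p assume "p \<in> L"
    then obtain u where
      "const_coeff p = 0" "\<forall>r\<in>rays m Et. linear_coeff r p = (\<Sum>j\<in>Et. u j * ray_vec m Et \<pi> r j)"
      unfolding L_def by blast
    then show "c * p \<in> L"
      unfolding L_def mem_Collect_eq lookup_mult_zero lookup_mult_single_one
      by (auto simp: sum_distrib_left mult.assoc intro!: exI[of _ "\<lambda>j. const_coeff c * u j"])
  qed
  moreover have "SR_gens m Et \<pi> \<union> lin_gens m Et \<pi> \<subseteq> L"
    unfolding L_def using SR_gen_low_coeffs[OF assms(1) surj] lin_gen_low_coeffs[OF assms(1)]
    by (auto intro: exI[of _ "\<lambda>_. 0"])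
  ultimately have "chow_ideal m Et \<pi> \<subseteq> L"
    unfolding chow_ideal_eq_span by (rule ring_ideal.span_minimal[rotated])
  then show ?thesis
    using assms(3) that unfolding L_def by blast
qed

lemma linear_coeff_hS_Inr: "linear_coeff (Inr i) (hS m S) = 0"
  unfolding hS_def xT_def lookup_sum linear_coeff_var by simp

lemma linear_coeff_hS_Inl:
  assumes "T \<subset> groundE m"
  shows "linear_coeff (Inl T) (hS m S) = of_bool (\<not> S \<subseteq> T)"
proof -
  have "finite {U. U \<subset> groundE m \<and> \<not> S \<subseteq> U}"
    using finite_psubsets_groundE by (rule rev_finite_subset) auto
  then show ?thesis
    unfolding hS_def xT_def lookup_sum linear_coeff_var using assms
    by (simp add: of_bool_def sum.delta)
qed

lemma var_Inr_minus_hS_mem_lin_gens: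
  assumes "finite Et" "j \<in> Et"
  shows "var (Inr j) - hS m {\<pi> j} \<in> lin_gens m Et \<pi>"
proof -
  define u where "u i = (if i = j then 1 else 0 :: int)" for i
  have "(\<Sum>i\<in>Et. u i * ray_vec m Et \<pi> r i) = (\<Sum>i\<in>Et. if i = j then ray_vec m Et \<pi> r i else 0)" for r
    by (rule sum.cong) (simp_all add: u_def)
  then have pairing: "(\<Sum>i\<in>Et. u i * ray_vec m Et \<pi> r i) = ray_vec m Et \<pi> r j" for r
    using assms by simp
  have "(\<Sum>T | T \<subset> groundE m. of_int (ray_vec m Et \<pi> (Inl T) j) * xT T)
      = (\<Sum>T | T \<subset> groundE m. if \<not> {\<pi> j} \<subseteq> T then - xT T else 0)"
    using assms(2) by (intro sum.cong) (auto simp: ray_vec_def preim_def)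
  also have "\<dots> = - hS m {\<pi> j}"
    unfolding hS_def using finite_psubsets_groundE
    by (simp add: sum.inter_filter[symmetric] sum_negf conj_commute)
  finally have Inl: "(\<Sum>T | T \<subset> groundE m. of_int (ray_vec m Et \<pi> (Inl T) j) * var (Inl T))
      = - hS m {\<pi> j}"
    by (simp add: xT_def)
  have "(\<Sum>i\<in>Et. of_int (ray_vec m Et \<pi> (Inr i) j) * var (Inr i))
      = (\<Sum>i\<in>Et. if i = j then var (Inr i) else 0)"
    by (intro sum.cong) (auto simp: ray_vec_def)
  then have Inr: "(\<Sum>i\<in>Et. of_int (ray_vec m Et \<pi> (Inr i) j) * var (Inr i)) = var (Inr j)"
    using assms by simp
  have "var (Inr j) - hS m {\<pi> j}
      = (\<Sum>r\<in>rays m Et. of_int (\<Sum>i\<in>Et. u i * ray_vec m Et \<pi> r i) * var r)"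
    unfolding pairing sum_rays[OF assms(1)] Inl Inr by simp
  then show ?thesis
    unfolding lin_gens_def by (rule image_eqI[where x = u]) simp
qed

lemma var_congruent_hS_combination:
  assumes "finite Et" "\<forall>j\<in>Et. \<pi> j \<in> groundE m" "r \<in> rays m Et"
  shows "\<exists>v\<in>int_module.span (hS m ` {S. S \<noteq> {} \<and> S \<subseteq> groundE m}).
    var r - v \<in> chow_ideal m Et \<pi>"
proof (cases r)
  case (Inl T)
  then have "T \<subset> groundE m"
    using assms(3) by (auto simp: rays_def)
  then have "var r \<in> int_module.span (hS m ` {S. S \<noteq> {} \<and> S \<subseteq> groundE m})"
    unfolding Inl xT_def[symmetric] by (rule mem_int_span_nonsuperset_sums[OF finite_groundE hS_def])
  then show ?thesis
    by (intro bexI[of _ "var r"]) (simp_all add: chow_ideal_eq_span ring_ideal.span_zero)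
next
  case (Inr j)
  then have "j \<in> Et"
    using assms(3) by (auto simp: rays_def)
  then have "hS m {\<pi> j} \<in> int_module.span (hS m ` {S. S \<noteq> {} \<and> S \<subseteq> groundE m})"
    using assms(2) by (auto intro: int_module.span_base)
  moreover have "var r - hS m {\<pi> j} \<in> chow_ideal m Et \<pi>"
    unfolding Inr chow_ideal_eq_span
    by (rule ring_ideal.span_base) (simp add: var_Inr_minus_hS_mem_lin_gens[OF assms(1) \<open>j \<in> Et\<close>])
  ultimately show ?thesis ..
qed

lemma linear_form_congruent_hS_combination:
  assumes "finite Et" "\<forall>j\<in>Et. \<pi> j \<in> groundE m" "linear_form (rays m Et) f"
  shows "\<exists>d. f - (\<Sum>S | S \<noteq> {} \<and> S \<subseteq> groundE m. of_int (d S) * hS m S) \<in> chow_ideal m Et \<pi>"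
proof -
  let ?V = "int_module.span (hS m ` {S. S \<noteq> {} \<and> S \<subseteq> groundE m})"
  let ?C = "{p. \<exists>v\<in>?V. p - v \<in> chow_ideal m Et \<pi>}"
  have C: "int_module.subspace ?C"
    unfolding chow_ideal_eq_span by (rule int_subspace_plus_ideal) simp
  obtain c where "f = (\<Sum>r\<in>rays m Et. of_int (c r) * var r)"
    using assms(3) unfolding linear_form_def by blast
  moreover have "var r \<in> ?C" if "r \<in> rays m Et" for r
    using var_congruent_hS_combination[OF assms(1,2) that] by blast
  ultimately have "f \<in> ?C"
    by (simp only:) (intro int_module.subspace_sum[OF C] int_module.subspace_scale[OF C])
  then show ?thesis
    by (auto simp: int_span_image_finite_iff[OF finite_nonempty_subsets_groundE])
qed

lemma hS_combination_in_chow_ideal_imp_zero: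
  fixes Et :: "'b set"
  assumes "finite Et" and surj: "\<forall>i\<in>groundE m. \<exists>j\<in>Et. \<pi> j = i"
    and P: "(\<Sum>S | S \<noteq> {} \<and> S \<subseteq> groundE m. of_int (d S) * hS m S) \<in> chow_ideal m Et \<pi>"
    and "S \<noteq> {}" "S \<subseteq> groundE m"
  shows "d S = 0"
proof -
  let ?P = "\<Sum>S | S \<noteq> {} \<and> S \<subseteq> groundE m. of_int (d S) * (hS m S :: 'b rpoly)"
  obtain u where u: "\<And>r. r \<in> rays m Et \<Longrightarrow> linear_coeff r ?P = (\<Sum>j\<in>Et. u j * ray_vec m Et \<pi> r j)"
    using chow_ideal_linear_coeffs[OF assms(1) surj P] by blast
  have coeff: "linear_coeff r ?P = (\<Sum>S | S \<noteq> {} \<and> S \<subseteq> groundE m. d S * linear_coeff r (hS m S))" for r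
    by (simp add: lookup_sum lookup_of_int_mult)
  have "u i = 0" if "i \<in> Et" for i
  proof -
    have "Inr i \<in> rays m Et"
      using that by (simp add: rays_def)
    moreover have "ray_vec m Et \<pi> (Inr i) j = of_bool (j = i)" for j
      by (simp add: ray_vec_def)
    ultimately show ?thesis
      using u[of "Inr i"] assms(1) that unfolding coeff linear_coeff_hS_Inr by simp
  qed
  then have "(\<Sum>S | S \<noteq> {} \<and> S \<subseteq> groundE m \<and> \<not> S \<subseteq> T. d S) = 0" if "T \<subset> groundE m" for T
  proof -
    have "Inl T \<in> rays m Et"
      using that by (simp add: rays_def)
    then show ?thesis
      using u[of "Inl T"] that finite_nonempty_subsets_groundE[of m]
      unfolding coeff linear_coeff_hS_Inl[OF that]
      by (simp add: \<open>\<And>i. i \<in> Et \<Longrightarrow> u i = 0\<close> Collect_conj_eq Int_assoc)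
  qed
  then show ?thesis
    using eq_0_if_nonsuperset_sums_eq_0[OF finite_groundE _ assms(4,5)] by blast
qed

lemma polynomial_congruent_hS_monomial_combination:
  fixes p :: "'b rpoly"
  assumes "finite Et" "\<forall>j\<in>Et. \<pi> j \<in> groundE m" "uses_vars (rays m Et) p"
  shows "\<exists>M c. finite M \<and>
    p - (\<Sum>\<alpha>\<in>M. of_int (c \<alpha>) * (\<Prod>S | S \<noteq> {} \<and> S \<subseteq> groundE m. hS m S ^ \<alpha> S))
      \<in> chow_ideal m Et \<pi>"
proof -
  let ?N = "{S. S \<noteq> {} \<and> S \<subseteq> groundE m}"
  let ?mon = "\<lambda>\<alpha>. \<Prod>S\<in>?N. (hS m S :: 'b rpoly) ^ \<alpha> S"
  let ?W = "int_module.span (range ?mon)"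
  let ?C = "{p. \<exists>w\<in>?W. p - w \<in> chow_ideal m Et \<pi>}"
  have W_mult: "x * y \<in> ?W" if "x \<in> ?W" "y \<in> ?W" for x y
  proof (rule int_span_mult_closed[OF _ that])
    fix x y assume "x \<in> range ?mon" "y \<in> range ?mon"
    then obtain a b where "x = ?mon a" "y = ?mon b"
      by blast
    then have "x * y = ?mon (\<lambda>S. a S + b S)"
      by (simp add: power_add prod.distrib)
    then show "x * y \<in> range ?mon"
      by (rule range_eqI[where x = "\<lambda>S. a S + b S"])
  qed
  have "hS m S = ?mon (\<lambda>T. of_bool (T = S))" if "S \<in> ?N" for S
    using that finite_nonempty_subsets_groundE[of m] by (simp add: of_bool_def if_distrib prod.delta cong: if_cong)
  then have "int_module.span (hS m ` ?N) \<subseteq> ?W"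
    by (intro int_module.span_mono) auto
  then have vars: "var r \<in> ?C" if "r \<in> rays m Et" for r
    using var_congruent_hS_combination[OF assms(1,2) that] by blast
  have C: "int_module.subspace ?C"
    unfolding chow_ideal_eq_span by (rule int_subspace_plus_ideal) simp
  have "p \<in> ?C"
  proof (rule polynomial_mem_subring[OF assms(3)])
    have "1 \<in> ?W"
      by (rule int_module.span_base, rule range_eqI[where x = "\<lambda>_. 0"]) simp
    then show "1 \<in> ?C"
      by (intro CollectI bexI[of _ 1]) (simp_all add: chow_ideal_eq_span ring_ideal.span_zero)
    show "x - y \<in> ?C" if "x \<in> ?C" "y \<in> ?C" for x y
      using int_module.subspace_diff[OF C that] .
    show "x * y \<in> ?C" if x: "x \<in> ?C" and y: "y \<in> ?C" for x y
    proof -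
      obtain v w where "v \<in> ?W" "x - v \<in> chow_ideal m Et \<pi>" "w \<in> ?W" "y - w \<in> chow_ideal m Et \<pi>"
        using x y by blast
      then show ?thesis
        unfolding mem_Collect_eq chow_ideal_eq_span by (intro mult_mem_plus_ideal W_mult)
    qed
  qed (fact vars)
  then obtain w where "w \<in> ?W" "p - w \<in> chow_ideal m Et \<pi>"
    by blast
  from \<open>w \<in> ?W\<close> obtain M c where "finite M" "M \<subseteq> UNIV" "w = (\<Sum>\<alpha>\<in>M. of_int (c \<alpha>) * ?mon \<alpha>)"
    by (rule int_span_imageE)
  then show ?thesis
    using \<open>p - w \<in> chow_ideal m Et \<pi>\<close> by blast
qed

theorem proposition2p10:
  fixes m :: nat and a :: "nat \<Rightarrow> nat" and Et :: "'b set" and \<pi> :: "'b \<Rightarrow> nat"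
  assumes "finite Et"
    and "\<forall>j\<in>Et. \<pi> j \<in> groundE m"
    and "\<forall>i\<in>groundE m. card (preim Et \<pi> {i}) = a i"
    and "\<forall>i\<in>groundE m. a i \<ge> 1"
  shows
    \<comment> \<open>the h_S span A^1\<close>
    "(\<forall>f. linear_form (rays m Et) f \<longrightarrow>
        (\<exists>d :: nat set \<Rightarrow> int.
           f - (\<Sum>S\<in>{S. S \<noteq> {} \<and> S \<subseteq> groundE m}. of_int (d S) * hS m S)
             \<in> chow_ideal m Et \<pi>))
   \<and> \<comment> \<open>the h_S are linearly independent in A^1\<close>
    (\<forall>d :: nat set \<Rightarrow> int.
        (\<Sum>S\<in>{S. S \<noteq> {} \<and> S \<subseteq> groundE m}. of_int (d S) * (hS m S :: 'b rpoly))
           \<in> chow_ideal m Et \<pi>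
        \<longrightarrow> (\<forall>S. S \<noteq> {} \<and> S \<subseteq> groundE m \<longrightarrow> d S = 0))
   \<and> \<comment> \<open>monomials in the h_S span A as an abelian group\<close>
    (\<forall>p. uses_vars (rays m Et) p \<longrightarrow>
        (\<exists>M :: (nat set \<Rightarrow> nat) set. \<exists>c :: (nat set \<Rightarrow> nat) \<Rightarrow> int.
           finite M \<and>
           p - (\<Sum>\<alpha>\<in>M. of_int (c \<alpha>) *
                  (\<Prod>S\<in>{S. S \<noteq> {} \<and> S \<subseteq> groundE m}. hS m S ^ \<alpha> S))
             \<in> chow_ideal m Et \<pi>))"
proof -
  have surj: "\<forall>i\<in>groundE m. \<exists>j\<in>Et. \<pi> j = i"
  proof
    fix i assume "i \<in> groundE m"
    then have "preim Et \<pi> {i} \<noteq> {}"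
      using assms(3,4) by fastforce
    then show "\<exists>j\<in>Et. \<pi> j = i"
      by (auto simp: preim_def)
  qed
  show ?thesis
  proof (intro conjI allI impI)
    show "\<exists>d. f - (\<Sum>S | S \<noteq> {} \<and> S \<subseteq> groundE m. of_int (d S) * hS m S) \<in> chow_ideal m Et \<pi>"
      if "linear_form (rays m Et) f" for f
      using that by (rule linear_form_congruent_hS_combination[OF assms(1,2)])
    show "d S = 0"
      if "(\<Sum>S | S \<noteq> {} \<and> S \<subseteq> groundE m. of_int (d S) * hS m S) \<in> chow_ideal m Et \<pi>"
        and "S \<noteq> {} \<and> S \<subseteq> groundE m" for d S
      using that by (intro hS_combination_in_chow_ideal_imp_zero[OF assms(1) surj]) auto
    show "\<exists>M c. finite M \<and> p - (\<Sum>\<alpha>\<in>M. of_int (c \<alpha>) *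
        (\<Prod>S | S \<noteq> {} \<and> S \<subseteq> groundE m. hS m S ^ \<alpha> S)) \<in> chow_ideal m Et \<pi>"
      if "uses_vars (rays m Et) p" for p
      using that by (rule polynomial_congruent_hS_monomial_combination[OF assms(1,2)])
  qed
qed

end
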